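(* Let $d$ be a power of $2$, $1\le k\le d$, and $\delta>0$. Let $g_{a,c}(x)=a(x-c)\bmod d$. Let $L=O(\log^2(d/k))$ and $B=O(k\log(d/\delta))$, and let $(a_1,c_1),\ldots,(a_L,c_L)$ be any pairs of integers in $\{1,\ldots,d\}$ with each $a_\ell$ odd. Then there is a set $R\subseteq\{0,\ldots,d-1\}$ with $|R|=O\big(\sqrt{k\log(d/\delta)}\cdot\log^2(d/k)\big)$ such that for every $\ell\in\{1,\ldots,L\}$ and every $s\in\{0,\ldots,B-1\}$ there exist $r,r'\in R$ with $r-r'=g_{a_\ell,c_\ell}(s)$ or $r-r'=d-g_{a_\ell,c_\ell}(s)$. Consequently, for any $x^{(1)},\dots,x^{(n)}$ drawn from a distribution whose covariance matrix $T$ is circulant with first column $t$ (so $t_u=t_{d-u}$), reading only the entries indexed by $R$ of each sample yields measurements of all entries $t_{g_{a_\ell,c_\ell}(s)}$ read by the sparse Fourier transform procedure described in the context.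
   Context: The sparse Fourier transform procedure referred to: a randomized algorithm which, given $x\in\mathbb{R}^d$ ($d$ a power of 2), sparsity $k$ and error parameter $\delta$, chooses $L=O(\log^2(d/k))$ pairs $(a_\ell,c_\ell)$ uniformly from $\{1,\dots,d\}$ with $a_\ell$ odd, and reads only the blocks of entries $x_{g_{a_\ell,c_\ell}(0)},\dots,x_{g_{a_\ell,c_\ell}(B-1)}$ with $B=O(k\log(d/\delta))$. The implied constants in $|R|$ depend only on those in $L$ and $B$. *)

theory Defs
  imports Complex_Main
begin

definition g_map :: "nat \<Rightarrow> int \<Rightarrow> int \<Rightarrow> int \<Rightarrow> int" where
  "g_map d a c x = (a * (x - c)) mod int d"

end

theory Submission imports Defs begin

text \<open>Baby-step giant-step. With m = \<lceil>\<surd>B\<rceil>, every 0 \<le> s < m * m is i m + j with i, j < m,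
  so a (s - c) is, modulo d, the difference of the giant step a (i m - c) and the baby step -a j.
  Taking both families of m residues for each of the L hash maps gives a set R of size at most
  2 L m = O(\<surd>(k log(d/\<delta>)) log^2(d/k)). A difference x - y of residues in [0, d) is either its own
  residue g modulo d, or y - x = d - g.\<close>

definition cyclic_diff_covers :: "int set \<Rightarrow> nat \<Rightarrow> int \<Rightarrow> bool" where
  "cyclic_diff_covers R d g \<longleftrightarrow> (\<exists>r\<in>R. \<exists>r'\<in>R. r - r' = g \<or> r - r' = int d - g)"

lemma cyclic_diff_covers_mono:
  "cyclic_diff_covers R d g \<Longrightarrow> R \<subseteq> R' \<Longrightarrow> cyclic_diff_covers R' d g"
  unfolding cyclic_diff_covers_def by blast

lemma diff_eq_mod_or_complement:
  fixes x y :: int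
  assumes "0 \<le> x" "x < int d" "0 \<le> y" "y < int d"
  shows "x - y = (x - y) mod int d \<or> y - x = int d - (x - y) mod int d"
proof (cases "y \<le> x")
  case True
  then show ?thesis using assms by simp
next
  case False
  have "(x - y) mod int d = (x - y + int d) mod int d" by simp
  also have "\<dots> = x - y + int d" using assms False by (intro mod_pos_pos_trivial) auto
  finally show ?thesis by simp
qed

lemma cyclic_diff_covers_mod:
  assumes "x \<in> R" "y \<in> R" "R \<subseteq> {0..<int d}"
  shows "cyclic_diff_covers R d ((x - y) mod int d)"
proof -
  have "0 \<le> x" "x < int d" "0 \<le> y" "y < int d" using assms by auto
  then show ?thesis
    using assms(1,2) diff_eq_mod_or_complement unfolding cyclic_diff_covers_def by blast
qed

definition baby_giant_set :: "nat \<Rightarrow> int \<Rightarrow> int \<Rightarrow> nat \<Rightarrow> int set" where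
  "baby_giant_set d a c m =
     (\<lambda>i. (a * (int i * int m - c)) mod int d) ` {..<m} \<union> (\<lambda>j. (- a * int j) mod int d) ` {..<m}"

lemma baby_giant_set_subset: "d > 0 \<Longrightarrow> baby_giant_set d a c m \<subseteq> {0..<int d}"
  unfolding baby_giant_set_def by auto

lemma card_baby_giant_set_le: "card (baby_giant_set d a c m) \<le> 2 * m"
proof -
  have "card (baby_giant_set d a c m) \<le> card ((\<lambda>i. (a * (int i * int m - c)) mod int d) ` {..<m})
      + card ((\<lambda>j. (- a * int j) mod int d) ` {..<m})"
    unfolding baby_giant_set_def by (rule card_Un_le)
  also have "\<dots> \<le> m + m" by (intro add_mono card_image_le[THEN order_trans]) auto
  finally show ?thesis by simp
qed

lemma baby_giant_set_covers:
  assumes "d > 0" and "n < m * m"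
  shows "cyclic_diff_covers (baby_giant_set d a c m) d (g_map d a c (int n))"
proof -
  define i j where "i = n div m" and "j = n mod m"
  have "m > 0" using assms(2) by (cases m) auto
  then have ij: "i < m" "j < m" and n: "int n = int i * int m + int j"
    using assms(2) unfolding i_def j_def
    by (auto simp: less_mult_imp_div_less simp flip: of_nat_mult of_nat_add)
  define x y where "x = (a * (int i * int m - c)) mod int d" and "y = (- a * int j) mod int d"
  have "x \<in> baby_giant_set d a c m" "y \<in> baby_giant_set d a c m"
    using ij unfolding baby_giant_set_def x_def y_def by auto
  moreover have "(x - y) mod int d = g_map d a c (int n)"
    unfolding x_def y_def g_map_def n by (simp add: mod_diff_eq algebra_simps)
  ultimately show ?thesis using cyclic_diff_covers_mod baby_giant_set_subset[OF assms(1)] by metis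
qed

lemma exists_cyclic_diff_cover:
  assumes "d > 0" and "finite I"
  obtains R where "R \<subseteq> {0..<int d}" and "card R \<le> card I * (2 * m)"
    and "\<And>l n. l \<in> I \<Longrightarrow> n < m * m \<Longrightarrow> cyclic_diff_covers R d (g_map d (a l) (c l) (int n))"
proof
  let ?R = "\<Union>l\<in>I. baby_giant_set d (a l) (c l) m"
  show "?R \<subseteq> {0..<int d}" using baby_giant_set_subset[OF assms(1)] by blast
  have "card ?R \<le> (\<Sum>l\<in>I. card (baby_giant_set d (a l) (c l) m))"
    using assms(2) by (rule card_UN_le)
  also have "\<dots> \<le> card I * (2 * m)" using sum_bounded_above[OF card_baby_giant_set_le] by simp
  finally show "card ?R \<le> card I * (2 * m)" .
  fix l n assume "l \<in> I" "n < m * m"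
  have "baby_giant_set d (a l) (c l) m \<subseteq> ?R" using \<open>l \<in> I\<close> by blast
  with baby_giant_set_covers[OF assms(1) \<open>n < m * m\<close>]
  show "cyclic_diff_covers ?R d (g_map d (a l) (c l) (int n))" by (rule cyclic_diff_covers_mono)
qed

lemma ceiling_sqrt_bounds:
  fixes n :: nat
  defines "r \<equiv> nat \<lceil>sqrt n\<rceil>"
  shows "n \<le> r * r" and "real r \<le> 2 * sqrt n"
proof -
  have r: "real r = of_int \<lceil>sqrt n\<rceil>"
    unfolding r_def using real_sqrt_ge_zero[of n] by simp
  then have "sqrt n \<le> real r" by linarith
  then have "sqrt n * sqrt n \<le> real r * real r" by (intro mult_mono) simp_all
  then show "n \<le> r * r" by (simp flip: of_nat_mult)
  show "real r \<le> 2 * sqrt n"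
  proof (cases "n = 0")
    case False
    then have "1 \<le> sqrt n" by simp
    then show ?thesis using r by linarith
  qed (simp add: r_def)
qed

lemma exists_small_cyclic_diff_cover:
  fixes \<mu> \<beta> :: real
  assumes "d > 0" and L_le: "real L \<le> CL * \<mu>\<^sup>2" and B_le: "real B \<le> CB * \<beta>"
  shows "\<exists>R. R \<subseteq> {0..<int d} \<and> real (card R) \<le> 4 * CL * sqrt CB * sqrt \<beta> * \<mu>\<^sup>2 \<and>
    (\<forall>l\<in>{1..L}. \<forall>s\<in>{0..<int B}. cyclic_diff_covers R d (g_map d (a l) (c l) s))"
proof -
  define m where "m = nat \<lceil>sqrt (real B)\<rceil>"
  obtain R where subset: "R \<subseteq> {0..<int d}" and card: "card R \<le> card {1..L} * (2 * m)"
    and covers: "\<And>l n. l \<in> {1..L} \<Longrightarrow> n < m * m \<Longrightarrow>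
      cyclic_diff_covers R d (g_map d (a l) (c l) (int n))"
    using exists_cyclic_diff_cover[OF \<open>d > 0\<close>, of "{1..L}" m a c] by blast
  have "card R \<le> L * (2 * m)" using card by simp
  then have "real (card R) \<le> real L * (2 * real m)"
    by (metis of_nat_le_iff of_nat_mult of_nat_numeral)
  also have "\<dots> \<le> CL * \<mu>\<^sup>2 * (2 * (2 * sqrt (real B)))"
    using L_le ceiling_sqrt_bounds(2)[of B, folded m_def] by (intro mult_mono) simp_all
  also have "\<dots> \<le> CL * \<mu>\<^sup>2 * (2 * (2 * sqrt (CB * \<beta>)))"
    using L_le B_le by (intro mult_left_mono) simp_all
  also have "\<dots> = 4 * CL * sqrt CB * sqrt \<beta> * \<mu>\<^sup>2"
    by (simp add: real_sqrt_mult)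
  finally have card_bound: "real (card R) \<le> 4 * CL * sqrt CB * sqrt \<beta> * \<mu>\<^sup>2" .
  have "cyclic_diff_covers R d (g_map d (a l) (c l) s)"
    if "l \<in> {1..L}" "s \<in> {0..<int B}" for l s
    using that covers[of l "nat s"] ceiling_sqrt_bounds(1)[of B, folded m_def] by auto
  then show ?thesis using subset card_bound by blast
qed

theorem corollary1:
  fixes CL CB :: real
  assumes "CL > 0" and "CB > 0"
  shows "\<exists>C>0. \<forall>(d::nat) (k::nat) (\<delta>::real) (L::nat) (B::nat) (a::nat \<Rightarrow> int) (c::nat \<Rightarrow> int).
    (\<exists>m::nat. d = 2 ^ m) \<and> 1 \<le> k \<and> k \<le> d \<and> \<delta> > 0 \<and>
    real L \<le> CL * (ln (real d / real k))\<^sup>2 \<and>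
    real B \<le> CB * real k * ln (real d / \<delta>) \<and>
    (\<forall>l\<in>{1..L}. a l \<in> {1..int d} \<and> odd (a l) \<and> c l \<in> {1..int d})
    \<longrightarrow> (\<exists>R. R \<subseteq> {0..<int d} \<and>
          real (card R) \<le> C * sqrt (real k * ln (real d / \<delta>)) * (ln (real d / real k))\<^sup>2 \<and>
          (\<forall>l\<in>{1..L}. \<forall>s\<in>{0..<int B}. \<exists>r\<in>R. \<exists>r'\<in>R.
              r - r' = g_map d (a l) (c l) s \<or> r - r' = int d - g_map d (a l) (c l) s))"
  using exists_small_cyclic_diff_cover[unfolded cyclic_diff_covers_def]
  by (intro exI[of _ "4 * CL * sqrt CB"] conjI allI impI) (use assms in \<open>auto simp: mult.assoc\<close>)

end
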